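(* There is no arrangement $\mathcal{A}$ of $14$ lines in $\mathbb{P}^2\mathbb{C}$ admitting a partition $\mathcal{A}=\mathcal{L}\sqcup\mathcal{K}$ with $|\mathcal{L}|=6$ and $|\mathcal{K}|=8$ such that each line in $\mathcal{L}$ contains exactly $4$ quadruple points of type $(LKLK)$ and each line in $\mathcal{K}$ contains exactly $3$ quadruple points of type $(LKLK)$.
   Context: Given a partition $\mathcal{A}=\mathcal{L}\sqcup\mathcal{K}$ of the lines of an arrangement, a quadruple point of type $(LKLK)$ is a point of $\mathbb{P}^2$ lying on exactly four lines of $\mathcal{A}$, two of them in $\mathcal{L}$ and two in $\mathcal{K}$. *)

theory Defs
  imports Complex_Main
begin

text \<open>Homogeneous coordinates in C^3. Points and lines of the complex projective
plane are represented by nonzero vectors, up to nonzero scalar multiples.\<close>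

type_synonym cvec = "complex \<times> complex \<times> complex"

definition smult3 :: "complex \<Rightarrow> cvec \<Rightarrow> cvec" where
  "smult3 c v = (case v of (x, y, z) \<Rightarrow> (c * x, c * y, c * z))"

definition proj_class :: "cvec \<Rightarrow> cvec set" where
  "proj_class v = {w. \<exists>c. c \<noteq> 0 \<and> w = smult3 c v}"

definition incid :: "cvec \<Rightarrow> cvec \<Rightarrow> bool" where
  "incid p l \<longleftrightarrow> (case p of (x, y, z) \<Rightarrow> case l of (a, b, c) \<Rightarrow> a * x + b * y + c * z = 0)"

definition line_arrangement :: "cvec set \<Rightarrow> bool" where
  "line_arrangement A \<longleftrightarrow> finite A \<and> (\<forall>l\<in>A. l \<noteq> (0, 0, 0)) \<and>
     (\<forall>l\<in>A. \<forall>m\<in>A. l \<noteq> m \<longrightarrow> proj_class l \<noteq> proj_class m)"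

text \<open>p is a quadruple point of type (LKLK) for the partition L, K: it lies on exactly
two lines of L and exactly two lines of K (hence on exactly four lines of L \<union> K).\<close>
definition quad_LKLK :: "cvec set \<Rightarrow> cvec set \<Rightarrow> cvec \<Rightarrow> bool" where
  "quad_LKLK L K p \<longleftrightarrow> p \<noteq> (0, 0, 0) \<and> card {l \<in> L. incid p l} = 2 \<and> card {k \<in> K. incid p k} = 2"

definition num_LKLK_on :: "cvec set \<Rightarrow> cvec set \<Rightarrow> cvec \<Rightarrow> nat" where
  "num_LKLK_on L K l = card {proj_class p | p. quad_LKLK L K p \<and> incid p l}"

end

theory Submission
  imports Defs
begin

text \<open>
  Each LKLK point on a K-line lies on exactly two L-lines, and two such points share no L-line,
  so the three LKLK points of a K-line pair off all six L-lines. Similarly the four LKLK points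
  on an L-line l join it to four of the other five L-lines; the fifth is the partner of l, and
  L splits into partner pairs {a, a'}, {b, b'}, {c, c'}. Every K-line therefore induces a
  fixed-point-free matching of L avoiding the partner pairs, and comparing the two K-lines through
  the point x \<inter> y of two non-partners shows that x \<inter> y, x' \<inter> z and y' \<inter> z' are collinear for
  every z outside {x, x', y, y'}. In coordinates where a, b, a' are the coordinate lines and
  b' = (1, 1, 1), five of these collinearities force c to coincide with b' or with c'.
\<close>

section \<open>Vector algebra in homogeneous coordinates\<close>

fun dot :: "cvec \<Rightarrow> cvec \<Rightarrow> complex" where
  "dot (a1, a2, a3) (b1, b2, b3) = a1 * b1 + a2 * b2 + a3 * b3"

fun cross :: "cvec \<Rightarrow> cvec \<Rightarrow> cvec" where
  "cross (a1, a2, a3) (b1, b2, b3) = (a2 * b3 - a3 * b2, a3 * b1 - a1 * b3, a1 * b2 - a2 * b1)"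

definition det3 :: "cvec \<Rightarrow> cvec \<Rightarrow> cvec \<Rightarrow> complex" where
  "det3 u v w = dot (cross u v) w"

lemma dot_commute: "dot u v = dot v u"
  by (cases u; cases v) (simp add: algebra_simps)

lemma dot_smult3: "dot (smult3 c u) v = c * dot u v"
  by (cases u; cases v) (simp add: smult3_def algebra_simps)

lemma smult3_smult3: "smult3 a (smult3 b u) = smult3 (a * b) u"
  by (cases u) (simp add: smult3_def)

lemma smult3_one: "smult3 1 u = u"
  by (cases u) (simp add: smult3_def)

lemma cross_smult3_self: "cross u (smult3 t u) = (0, 0, 0)"
  by (cases u) (simp add: smult3_def algebra_simps)

lemma smult3_dot_eq_if_cross_eq_zero:
  assumes "cross u v = (0, 0, 0)"
  shows "smult3 (dot u w) v = smult3 (dot v w) u"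
proof -
  obtain u1 u2 u3 v1 v2 v3 w1 w2 w3
    where uvw: "u = (u1, u2, u3)" "v = (v1, v2, v3)" "w = (w1, w2, w3)"
    by (cases u; cases v; cases w) auto
  with assms have "u2 * v3 = u3 * v2" "u3 * v1 = u1 * v3" "u1 * v2 = u2 * v1"
    by simp_all
  then show ?thesis
    by (simp add: uvw smult3_def) (intro conjI; algebra)
qed

lemma cross_eq_zero_imp_smult3:
  assumes u: "u \<noteq> (0, 0, 0)" and uv: "cross u v = (0, 0, 0)"
  shows "\<exists>t. v = smult3 t u"
proof -
  obtain w where w: "dot u w \<noteq> 0"
  proof (cases u)
    case (fields u1 u2 u3)
    with u that[of "(1, 0, 0)"] that[of "(0, 1, 0)"] that[of "(0, 0, 1)"] show thesis by auto
  qed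
  have "v = smult3 (1 / dot u w) (smult3 (dot u w) v)"
    using w by (simp add: smult3_smult3 smult3_one)
  also have "\<dots> = smult3 (dot v w / dot u w) u"
    by (simp add: smult3_dot_eq_if_cross_eq_zero[OF uv] smult3_smult3)
  finally show ?thesis ..
qed

lemma cross_cross_eq_zero:
  assumes "dot p l = 0" "dot p m = 0"
  shows "cross p (cross l m) = (0, 0, 0)"
proof -
  obtain p1 p2 p3 l1 l2 l3 m1 m2 m3
    where plm: "p = (p1, p2, p3)" "l = (l1, l2, l3)" "m = (m1, m2, m3)"
    by (cases p; cases l; cases m) auto
  with assms have "p1 * l1 + p2 * l2 + p3 * l3 = 0" "p1 * m1 + p2 * m2 + p3 * m3 = 0"
    by simp_all
  then show ?thesis
    by (simp add: plm) (intro conjI; algebra)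
qed

lemma incid_iff_dot: "incid p l \<longleftrightarrow> dot p l = 0"
  by (cases p; cases l) (simp add: incid_def algebra_simps)

lemma incid_smult3: "c \<noteq> 0 \<Longrightarrow> incid (smult3 c p) l \<longleftrightarrow> incid p l"
  by (simp add: incid_iff_dot dot_smult3)

lemma self_in_proj_class: "u \<in> proj_class u"
  unfolding proj_class_def by (rule CollectI, rule exI[of _ 1]) (simp add: smult3_one)

lemma proj_class_smult3: "c \<noteq> 0 \<Longrightarrow> proj_class (smult3 c u) = proj_class u"
  unfolding proj_class_def
proof (intro set_eqI iffI; clarsimp)
  fix d :: complex assume "c \<noteq> 0" "d \<noteq> 0"
  then show "\<exists>e. e \<noteq> 0 \<and> smult3 d (smult3 c u) = smult3 e u"
    by (intro exI[of _ "d * c"]) (simp add: smult3_smult3)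
next
  fix d :: complex assume "c \<noteq> 0" "d \<noteq> 0"
  then show "\<exists>e. e \<noteq> 0 \<and> smult3 d u = smult3 e (smult3 c u)"
    by (intro exI[of _ "d / c"]) (simp add: smult3_smult3)
qed

lemma proj_class_eq_iff_cross_eq_zero:
  assumes u: "u \<noteq> (0, 0, 0)" and v: "v \<noteq> (0, 0, 0)"
  shows "proj_class u = proj_class v \<longleftrightarrow> cross u v = (0, 0, 0)"
proof
  assume "proj_class u = proj_class v"
  then obtain c where "v = smult3 c u"
    using self_in_proj_class[of v] unfolding proj_class_def by auto
  then show "cross u v = (0, 0, 0)" by (simp add: cross_smult3_self)
next
  assume "cross u v = (0, 0, 0)"
  then obtain t where t: "v = smult3 t u" using cross_eq_zero_imp_smult3 u by blast
  with v have "t \<noteq> 0" by (cases u) (auto simp: smult3_def)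
  with t show "proj_class u = proj_class v" by (simp add: proj_class_smult3)
qed

lemma incid_if_proj_class_eq:
  assumes "proj_class p = proj_class q" "incid q l"
  shows "incid p l"
proof -
  obtain c where "c \<noteq> 0" "p = smult3 c q"
    using self_in_proj_class[of p] assms(1) unfolding proj_class_def by auto
  with assms(2) show ?thesis by (simp add: incid_smult3)
qed

lemma cross_eq_smult3_if_incid:
  assumes "p \<noteq> (0, 0, 0)" "incid p l" "incid p m"
  shows "\<exists>t. cross l m = smult3 t p"
proof -
  have "cross p (cross l m) = (0, 0, 0)"
    using assms cross_cross_eq_zero by (simp add: incid_iff_dot)
  then show ?thesis by (rule cross_eq_zero_imp_smult3[OF assms(1)])
qed

lemma proj_class_eq_if_incid_both:
  assumes lm: "cross l m \<noteq> (0, 0, 0)" and "p \<noteq> (0, 0, 0)" "q \<noteq> (0, 0, 0)"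
    and "incid p l" "incid p m" "incid q l" "incid q m"
  shows "proj_class p = proj_class q"
proof -
  obtain t s where t: "cross l m = smult3 t p" and s: "cross l m = smult3 s q"
    using cross_eq_smult3_if_incid assms by metis
  with lm have "t \<noteq> 0" "s \<noteq> 0" by (auto simp: smult3_def)
  then have "q = smult3 (t / s) p"
    using arg_cong[OF trans[OF s[symmetric] t], of "smult3 (1 / s)"] by (simp add: smult3_smult3 smult3_one)
  with \<open>t \<noteq> 0\<close> \<open>s \<noteq> 0\<close> show ?thesis by (simp add: proj_class_smult3)
qed

lemma incid_if_det3_eq_zero:
  assumes "cross l m \<noteq> (0, 0, 0)" "p \<noteq> (0, 0, 0)" "incid p l" "incid p m" "det3 l m n = 0"
  shows "incid p n"
proof -
  obtain t where t: "cross l m = smult3 t p" using cross_eq_smult3_if_incid assms by blast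
  with assms(1) have "t \<noteq> 0" by (auto simp: smult3_def)
  moreover have "det3 l m n = t * dot p n" by (simp add: det3_def t dot_smult3)
  ultimately show ?thesis using assms(5) by (simp add: incid_iff_dot)
qed

lemma det3_eq_zero_if_collinear:
  assumes "k \<noteq> (0, 0, 0)" "incid p k" "incid q k" "incid r k"
  shows "det3 p q r = 0"
proof -
  have "cross k (cross p q) = (0, 0, 0)"
    using assms cross_cross_eq_zero by (simp add: incid_iff_dot dot_commute)
  then obtain t where "cross p q = smult3 t k" using cross_eq_zero_imp_smult3 assms(1) by blast
  moreover have "dot k r = 0" using assms(4) by (simp add: incid_iff_dot dot_commute)
  ultimately show ?thesis by (simp add: det3_def dot_smult3)
qed

lemma det3_smult3: "det3 (smult3 s1 u) (smult3 s2 v) (smult3 s3 w) = s1 * s2 * s3 * det3 u v w"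
  by (cases u; cases v; cases w) (simp add: det3_def smult3_def algebra_simps)

lemma det3_cross_eq_zero_if_meets_collinear:
  assumes "k \<noteq> (0, 0, 0)" "p \<noteq> (0, 0, 0)" "q \<noteq> (0, 0, 0)" "r \<noteq> (0, 0, 0)"
    and "incid p l1" "incid p m1" "incid q l2" "incid q m2" "incid r l3" "incid r m3"
    and "incid p k" "incid q k" "incid r k"
  shows "det3 (cross l1 m1) (cross l2 m2) (cross l3 m3) = 0"
proof -
  obtain t1 t2 t3 where "cross l1 m1 = smult3 t1 p" "cross l2 m2 = smult3 t2 q" "cross l3 m3 = smult3 t3 r"
    using cross_eq_smult3_if_incid assms by metis
  with det3_eq_zero_if_collinear[of k p q r] assms show ?thesis by (simp add: det3_smult3)
qed

section \<open>Five collinearities force a coincidence\<close>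

fun apply_rows :: "cvec \<Rightarrow> cvec \<Rightarrow> cvec \<Rightarrow> cvec \<Rightarrow> cvec" where
  "apply_rows r1 r2 r3 v = (dot v r1, dot v r2, dot v r3)"

lemma det3_apply_rows:
  "det3 (apply_rows r1 r2 r3 u) (apply_rows r1 r2 r3 v) (apply_rows r1 r2 r3 w) = det3 r1 r2 r3 * det3 u v w"
  by (cases r1; cases r2; cases r3; cases u; cases v; cases w) (simp add: det3_def algebra_simps)

lemma det3_adjugate: "det3 (cross b c) (cross c a) (cross a b) = (det3 a b c)\<^sup>2"
  by (cases a; cases b; cases c) (simp add: det3_def algebra_simps power2_eq_square)

lemma det3_cross_cross_cross:
  "det3 (cross a b) (cross c d) (cross e f) = det3 c d f * det3 a b e - det3 c d e * det3 a b f"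
  by (cases a; cases b; cases c; cases d; cases e; cases f) (simp add: det3_def algebra_simps)

lemma det3_repeated: "det3 a a x = 0" "det3 a x a = 0" "det3 x a a = 0"
  by (cases a; cases x; simp add: det3_def algebra_simps)+

lemma det3_rotate: "det3 u v w = det3 v w u"
  by (cases u; cases v; cases w) (simp add: det3_def algebra_simps)

lemma det3_cross_commute: "det3 x y (cross v u) = - det3 x y (cross u v)"
  by (cases x; cases y; cases u; cases v) (simp add: det3_def algebra_simps)

lemma apply_rows_cross:
  "apply_rows (smult3 s1 (cross b c)) (smult3 s2 (cross c a)) (smult3 s3 (cross a b)) v
   = (s1 * det3 v b c, s2 * det3 a v c, s3 * det3 a b v)"
  by (cases a; cases b; cases c; cases v) (simp add: det3_def smult3_def algebra_simps)

lemma cross_eq_zero_if_cross_apply_rows_eq_zero: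
  assumes r: "det3 r1 r2 r3 \<noteq> 0"
    and uv: "cross (apply_rows r1 r2 r3 u) (apply_rows r1 r2 r3 v) = (0, 0, 0)"
  shows "cross u v = (0, 0, 0)"
proof -
  have "det3 (apply_rows r1 r2 r3 u) (apply_rows r1 r2 r3 v) (apply_rows r1 r2 r3 w) = 0" for w
    unfolding det3_def uv by simp
  with r have uvw: "det3 u v w = 0" for w by (simp only: det3_apply_rows) simp
  show ?thesis
    using uvw[of "(1, 0, 0)"] uvw[of "(0, 1, 0)"] uvw[of "(0, 0, 1)"]
    by (cases u; cases v) (simp add: det3_def)
qed

lemma coincidence_of_collinearities_normal:
  fixes p q r x y z u v w :: complex
  assumes E1: "det3 (cross (p, 0, 0) (0, q, 0)) (cross (0, 0, r) (x, y, z)) (cross (1, 1, 1) (u, v, w)) = 0"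
    and E2: "det3 (cross (p, 0, 0) (1, 1, 1)) (cross (0, 0, r) (x, y, z)) (cross (0, q, 0) (u, v, w)) = 0"
    and E3: "det3 (cross (p, 0, 0) (1, 1, 1)) (cross (0, 0, r) (u, v, w)) (cross (0, q, 0) (x, y, z)) = 0"
    and E4: "det3 (cross (p, 0, 0) (x, y, z)) (cross (0, 0, r) (1, 1, 1)) (cross (0, q, 0) (u, v, w)) = 0"
    and E5: "det3 (cross (p, 0, 0) (u, v, w)) (cross (0, 0, r) (1, 1, 1)) (cross (0, q, 0) (x, y, z)) = 0"
    and pqr: "p * q * r \<noteq> 0"
  shows "cross (x, y, z) (1, 1, 1) = (0, 0, 0) \<or> cross (x, y, z) (u, v, w) = (0, 0, 0)"
proof -
  have "det3 (cross (p, 0, 0) (0, q, 0)) (cross (0, 0, r) (x, y, z)) (cross (1, 1, 1) (u, v, w))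
    = p * q * r * (x * v - y * u - (x - y) * w)"
    by (simp add: det3_def algebra_simps)
  with E1 pqr have e1: "x * v - y * u - (x - y) * w = 0" by simp
  have "det3 (cross (p, 0, 0) (1, 1, 1)) (cross (0, 0, r) (x, y, z)) (cross (0, q, 0) (u, v, w))
    = p * q * r * (y * u - x * w)"
    by (simp add: det3_def algebra_simps)
  with E2 pqr have e2: "y * u = x * w" by simp
  have "det3 (cross (p, 0, 0) (1, 1, 1)) (cross (0, 0, r) (u, v, w)) (cross (0, q, 0) (x, y, z))
    = p * q * r * (v * x - u * z)"
    by (simp add: det3_def algebra_simps)
  with E3 pqr have e3: "v * x = u * z" by simp
  have "det3 (cross (p, 0, 0) (x, y, z)) (cross (0, 0, r) (1, 1, 1)) (cross (0, q, 0) (u, v, w))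
    = p * q * r * (u * z - y * w)"
    by (simp add: det3_def algebra_simps)
  with E4 pqr have e4: "u * z = y * w" by simp
  have "det3 (cross (p, 0, 0) (u, v, w)) (cross (0, 0, r) (1, 1, 1)) (cross (0, q, 0) (x, y, z))
    = p * q * r * (x * w - v * z)"
    by (simp add: det3_def algebra_simps)
  with E5 pqr have e5: "x * w = v * z" by simp
  have "y * u = v * x"
    using e1 e2 e3 e4 by algebra
  show ?thesis
  proof (cases "y * u = 0")
    case True
    then show ?thesis using e2 e3 e4 e5 \<open>y * u = v * x\<close> by auto
  next
    case False
    then have "x = y" "y = z" using e2 e3 e4 e5 \<open>y * u = v * x\<close> by (auto simp: algebra_simps)
    then show ?thesis by simp
  qed
qed

lemma coincidence_of_collinearities:
  assumes aba': "det3 a b a' \<noteq> 0" and b'ba': "det3 b' b a' \<noteq> 0"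
    and ab'a': "det3 a b' a' \<noteq> 0" and abb': "det3 a b b' \<noteq> 0"
    and E1: "det3 (cross a b) (cross a' c) (cross b' c') = 0"
    and E2: "det3 (cross a b') (cross a' c) (cross b c') = 0"
    and E3: "det3 (cross a b') (cross a' c') (cross b c) = 0"
    and E4: "det3 (cross a c) (cross a' b') (cross c' b) = 0"
    and E5: "det3 (cross a c') (cross a' b') (cross c b) = 0"
  shows "cross c b' = (0, 0, 0) \<or> cross c c' = (0, 0, 0)"
proof -
  \<comment> \<open>A projective change of coordinates taking a, b, a' to the coordinate lines and b' to (1, 1, 1).\<close>
  define T where "T = apply_rows (smult3 (1 / det3 b' b a') (cross b a'))
    (smult3 (1 / det3 a b' a') (cross a' a)) (smult3 (1 / det3 a b b') (cross a b))"
  have T: "T v = (det3 v b a' / det3 b' b a', det3 a v a' / det3 a b' a', det3 a b v / det3 a b b')" for v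
    unfolding T_def apply_rows_cross by simp
  define \<delta> where "\<delta> = (1 / det3 b' b a') * (1 / det3 a b' a') * (1 / det3 a b b') * (det3 a b a')\<^sup>2"
  have \<delta>: "\<delta> \<noteq> 0"
    using aba' b'ba' ab'a' abb' by (simp add: \<delta>_def)
  have det_T: "det3 (smult3 (1 / det3 b' b a') (cross b a'))
    (smult3 (1 / det3 a b' a') (cross a' a)) (smult3 (1 / det3 a b b') (cross a b)) = \<delta>"
    by (simp only: det3_smult3 det3_adjugate \<delta>_def)
  have T_preserves: "det3 (cross (T x1) (T x2)) (cross (T x3) (T x4)) (cross (T x5) (T x6))
     = \<delta>\<^sup>2 * det3 (cross x1 x2) (cross x3 x4) (cross x5 x6)" for x1 x2 x3 x4 x5 x6
    unfolding det3_cross_cross_cross T_def det3_apply_rows det_T by (simp add: algebra_simps power2_eq_square)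
  have Ta: "T a = (det3 a b a' / det3 b' b a', 0, 0)"
    and Tb: "T b = (0, det3 a b a' / det3 a b' a', 0)"
    and Ta': "T a' = (0, 0, det3 a b a' / det3 a b b')"
    by (simp_all add: T det3_repeated)
  have Tb': "T b' = (1, 1, 1)" using b'ba' ab'a' abb' by (simp add: T)
  obtain x y z where Tc: "T c = (x, y, z)" by (cases "T c")
  obtain u v w where Tc': "T c' = (u, v, w)" by (cases "T c'")
  have "cross (T c) (T b') = (0, 0, 0) \<or> cross (T c) (T c') = (0, 0, 0)"
    unfolding Tc Tc' Tb'
  proof (rule coincidence_of_collinearities_normal
      [where p = "det3 a b a' / det3 b' b a'" and q = "det3 a b a' / det3 a b' a'"
        and r = "det3 a b a' / det3 a b b'"])
  qed (use T_preserves[of a b a' c b' c'] T_preserves[of a b' a' c b c'] T_preserves[of a b' a' c' b c]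
      T_preserves[of a c a' b' b c'] T_preserves[of a c' a' b' b c] E1 E2 E3 E4 E5 \<delta>
      aba' b'ba' ab'a' abb' in \<open>simp_all add: Ta Tb Ta' Tb' Tc Tc' det3_cross_commute[of _ _ c' b]
      det3_cross_commute[of _ _ c b]\<close>)
  moreover have "det3 (smult3 (1 / det3 b' b a') (cross b a'))
    (smult3 (1 / det3 a b' a') (cross a' a)) (smult3 (1 / det3 a b b') (cross a b)) \<noteq> 0"
    using det_T \<delta> by simp
  ultimately show ?thesis
    using cross_eq_zero_if_cross_apply_rows_eq_zero unfolding T_def by blast
qed

lemma fixpoint_free_involution_on_six:
  assumes d: "distinct [x, y, x', y', z, z']"
    and f: "\<forall>m\<in>{x, y, x', y', z, z'}. f m \<in> {x, y, x', y', z, z'} \<and> f m \<noteq> m \<and> f (f m) = m"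
    and "f x = y" "f z \<noteq> z'"
  shows "(f x' = z \<and> f y' = z') \<or> (f x' = z' \<and> f y' = z)"
proof -
  have inv: "f a = b \<longleftrightarrow> f b = a" if "a \<in> {x, y, x', y', z, z'}" "b \<in> {x, y, x', y', z, z'}" for a b
    using f that by metis
  have "f y = x" using inv[of x y] \<open>f x = y\<close> by simp
  have "f x' \<noteq> y'"
  proof
    assume "f x' = y'"
    then have "f y' = x'" using inv[of x' y'] by simp
    have "f z \<in> {x, y, x', y', z, z'}" "f z \<noteq> z" using f by auto
    moreover have "f z \<noteq> x" "f z \<noteq> y" "f z \<noteq> x'" "f z \<noteq> y'"
      using inv[of z x] inv[of z y] inv[of z x'] inv[of z y'] d \<open>f x = y\<close> \<open>f y = x\<close>
        \<open>f x' = y'\<close> \<open>f y' = x'\<close> by auto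
    ultimately show False using \<open>f z \<noteq> z'\<close> by auto
  qed
  moreover have "f x' \<in> {x, y, x', y', z, z'}" "f x' \<noteq> x'" "f y' \<in> {x, y, x', y', z, z'}" "f y' \<noteq> y'"
    using f by auto
  moreover have "f x' \<noteq> x" "f x' \<noteq> y" "f y' \<noteq> x" "f y' \<noteq> y"
    using inv[of x' x] inv[of x' y] inv[of y' x] inv[of y' y] d \<open>f x = y\<close> \<open>f y = x\<close> by auto
  moreover have "f y' \<noteq> x'" "f x' = z \<Longrightarrow> f y' \<noteq> z" "f x' = z' \<Longrightarrow> f y' \<noteq> z'"
    using inv[of x' y'] inv[of y' z] inv[of y' z'] inv[of x' z] inv[of x' z'] d \<open>f x' \<noteq> y'\<close>
    by auto
  ultimately show ?thesis using d by auto
qed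

section \<open>Configurations with the prescribed LKLK counts\<close>

locale lklk_configuration =
  fixes L K :: "cvec set"
  assumes arrangement: "line_arrangement (L \<union> K)" and disjoint: "L \<inter> K = {}"
    and card_L: "card L = 6" and card_K: "card K = 8"
    and num_on_L: "\<forall>l\<in>L. num_LKLK_on L K l = 4" and num_on_K: "\<forall>k\<in>K. num_LKLK_on L K k = 3"
begin

abbreviation quad :: "cvec \<Rightarrow> bool" where
  "quad \<equiv> quad_LKLK L K"

definition meets :: "cvec \<Rightarrow> cvec \<Rightarrow> bool" where
  "meets m n \<longleftrightarrow> (\<exists>p. quad p \<and> incid p m \<and> incid p n)"

lemma meets_commute: "meets m n \<longleftrightarrow> meets n m"
  unfolding meets_def by blast

lemma finite_L: "finite L"
  using card_L card.infinite by fastforce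

lemma line_nonzero: "l \<in> L \<union> K \<Longrightarrow> l \<noteq> (0, 0, 0)"
  using arrangement unfolding line_arrangement_def by blast

lemma cross_lines_nonzero:
  assumes "l \<in> L \<union> K" "m \<in> L \<union> K" "l \<noteq> m"
  shows "cross l m \<noteq> (0, 0, 0)"
proof -
  have "proj_class l \<noteq> proj_class m"
    using arrangement assms unfolding line_arrangement_def by blast
  then show ?thesis using proj_class_eq_iff_cross_eq_zero line_nonzero assms by blast
qed

lemma quad_nonzero: "quad p \<Longrightarrow> p \<noteq> (0, 0, 0)"
  by (simp add: quad_LKLK_def)

lemma quad_card_L: "quad p \<Longrightarrow> card {l\<in>L. incid p l} = 2"
  by (simp add: quad_LKLK_def)

lemma quad_card_K: "quad p \<Longrightarrow> card {k\<in>K. incid p k} = 2"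
  by (simp add: quad_LKLK_def)

lemma proj_class_eq_if_on_two_lines:
  assumes "l \<in> L \<union> K" "m \<in> L \<union> K" "l \<noteq> m" "p \<noteq> (0, 0, 0)" "q \<noteq> (0, 0, 0)"
    and "incid p l" "incid p m" "incid q l" "incid q m"
  shows "proj_class p = proj_class q"
  using proj_class_eq_if_incid_both[OF cross_lines_nonzero[OF assms(1-3)] assms(4-9)] .

lemma incid_transfer:
  assumes "l \<in> L \<union> K" "m \<in> L \<union> K" "l \<noteq> m" "p \<noteq> (0, 0, 0)" "q \<noteq> (0, 0, 0)"
    and "incid p l" "incid p m" "incid q l" "incid q m" "incid q n"
  shows "incid p n"
  using proj_class_eq_if_on_two_lines[OF assms(1-9)] incid_if_proj_class_eq assms(10) by blast

lemma quad_not_on_three_L: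
  assumes "quad p" "l1 \<in> L" "l2 \<in> L" "l3 \<in> L" "distinct [l1, l2, l3]"
    and "incid p l1" "incid p l2" "incid p l3"
  shows False
proof -
  have "card {l1, l2, l3} \<le> card {l\<in>L. incid p l}"
    using assms by (intro card_mono) (auto simp: finite_L)
  with assms show False by (simp add: quad_card_L)
qed

lemma quad_other_L:
  assumes "quad p" "m \<in> L" "incid p m"
  obtains m' where "m' \<in> L" "m' \<noteq> m" "incid p m'"
proof -
  obtain x y where xy: "{l\<in>L. incid p l} = {x, y}" "x \<noteq> y"
    using quad_card_L[OF assms(1)] card_2_iff by metis
  then have "x \<in> L" "incid p x" "y \<in> L" "incid p y" by blast+
  with assms xy that show thesis by blast
qed

lemma quad_two_K:
  assumes "quad p"
  obtains k1 k2 where "k1 \<in> K" "k2 \<in> K" "k1 \<noteq> k2" "incid p k1" "incid p k2"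
proof -
  obtain x y where xy: "{k\<in>K. incid p k} = {x, y}" "x \<noteq> y"
    using quad_card_K[OF assms(1)] card_2_iff by metis
  then have "x \<in> K" "incid p x" "y \<in> K" "incid p y" by blast+
  with xy that show thesis by blast
qed

lemma card_meets:
  assumes g: "g \<in> L \<union> K" and Y: "Y \<subseteq> L" "g \<notin> Y" and pos: "num_LKLK_on L K g > 0"
    and n: "\<And>p. quad p \<Longrightarrow> incid p g \<Longrightarrow> card {m\<in>Y. incid p m} = n"
  shows "card {m\<in>Y. meets g m} = n * num_LKLK_on L K g"
proof -
  define S where "S = {proj_class p | p. quad p \<and> incid p g}"
  define through where
    "through C = {m\<in>Y. \<exists>p. C = proj_class p \<and> quad p \<and> incid p g \<and> incid p m}" for C
  have card_S: "num_LKLK_on L K g = card S"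
    unfolding S_def num_LKLK_on_def by simp
  with pos have "finite S" by (simp add: card_gt_0_iff)
  have meets_eq: "{m\<in>Y. meets g m} = (\<Union>C\<in>S. through C)"
    unfolding S_def through_def meets_def by blast
  have card_through: "card (through C) = n" if "C \<in> S" for C
  proof -
    obtain p0 where p0: "C = proj_class p0" "quad p0" "incid p0 g"
      using \<open>C \<in> S\<close> unfolding S_def by blast
    have "through C = {m\<in>Y. incid p0 m}"
      unfolding through_def using p0 incid_if_proj_class_eq by metis
    with p0 n show ?thesis by simp
  qed
  have disjoint: "through C \<inter> through D = {}" if "C \<in> S" "D \<in> S" "C \<noteq> D" for C D
  proof -
    have "C = D" if "m \<in> Y" "C = proj_class p" "quad p" "incid p g" "incid p m"
      "D = proj_class q" "quad q" "incid q g" "incid q m" for m p q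
      using proj_class_eq_if_on_two_lines[of g m p q] that g Y quad_nonzero by blast
    then show ?thesis using \<open>C \<noteq> D\<close> unfolding through_def by blast
  qed
  have "finite (through C)" for C
    using Y finite_L by (auto simp: through_def intro: finite_subset)
  then have "card {m\<in>Y. meets g m} = (\<Sum>C\<in>S. card (through C))"
    unfolding meets_eq using \<open>finite S\<close> disjoint by (simp add: card_UN_disjoint)
  also have "\<dots> = n * card S"
    using card_through by simp
  finally show ?thesis unfolding card_S .
qed

lemma K_meets_L:
  assumes k: "k \<in> K" and m: "m \<in> L"
  shows "meets k m"
proof -
  have "card {m\<in>L. meets k m} = 2 * num_LKLK_on L K k"
    using k disjoint num_on_K by (intro card_meets) (auto simp: quad_card_L)
  with k num_on_K card_L have "card {m\<in>L. meets k m} = card L" by simp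
  then have "{m\<in>L. meets k m} = L" by (intro card_subset_eq[OF finite_L]) auto
  with m show ?thesis by blast
qed

lemma card_meets_L:
  assumes l: "l \<in> L"
  shows "card {m\<in>L - {l}. meets l m} = 4"
proof -
  have "card {m\<in>L - {l}. incid p m} = 1" if "quad p" "incid p l" for p
  proof -
    have "{m\<in>L - {l}. incid p m} = {m\<in>L. incid p m} - {l}" by blast
    with that l show ?thesis by (simp add: quad_card_L)
  qed
  then have "card {m\<in>L - {l}. meets l m} = 1 * num_LKLK_on L K l"
    using l num_on_L by (intro card_meets) auto
  with l num_on_L show ?thesis by simp
qed

definition partner :: "cvec \<Rightarrow> cvec" where
  "partner l = (SOME m. m \<in> L \<and> m \<noteq> l \<and> \<not> meets l m)"

lemma partner:
  assumes l: "l \<in> L"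
  shows "partner l \<in> L" "partner l \<noteq> l" "\<not> meets l (partner l)"
proof -
  have "\<exists>m. m \<in> L \<and> m \<noteq> l \<and> \<not> meets l m"
  proof (rule ccontr)
    assume "\<nexists>m. m \<in> L \<and> m \<noteq> l \<and> \<not> meets l m"
    then have "{m\<in>L - {l}. meets l m} = L - {l}" by blast
    with card_meets_L[OF l] card_L l show False by simp
  qed
  then show "partner l \<in> L" "partner l \<noteq> l" "\<not> meets l (partner l)"
    unfolding partner_def by (metis (mono_tags, lifting) someI_ex)+
qed

lemma partner_unique:
  assumes "l \<in> L" "m \<in> L" "m \<noteq> l" "\<not> meets l m"
  shows "m = partner l"
proof (rule ccontr)
  assume ne: "m \<noteq> partner l"
  have "{m'\<in>L - {l}. meets l m'} \<subseteq> L - {l, m, partner l}"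
    using assms partner[OF assms(1)] by auto
  then have "card {m'\<in>L - {l}. meets l m'} \<le> card (L - {l, m, partner l})"
    by (intro card_mono) (simp add: finite_L)
  also have "\<dots> = 3"
    using assms partner[OF assms(1)] ne card_L by (simp add: card_Diff_subset)
  finally show False using card_meets_L[OF assms(1)] by simp
qed

lemma partner_partner: "l \<in> L \<Longrightarrow> partner (partner l) = l"
  using partner partner_unique meets_commute by metis

lemma meets_if_not_partner: "l \<in> L \<Longrightarrow> m \<in> L \<Longrightarrow> m \<noteq> l \<Longrightarrow> m \<noteq> partner l \<Longrightarrow> meets l m"
  using partner_unique by blast

definition joined :: "cvec \<Rightarrow> cvec \<Rightarrow> cvec \<Rightarrow> bool" where
  "joined k m m' \<longleftrightarrow> (\<exists>p. quad p \<and> incid p k \<and> incid p m \<and> incid p m')"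

lemma joined_commute: "joined k m m' \<longleftrightarrow> joined k m' m"
  unfolding joined_def by blast

lemma meets_if_joined: "joined k m m' \<Longrightarrow> meets m m'"
  unfolding joined_def meets_def by blast

lemma joined_unique:
  assumes k: "k \<in> K" and L: "m \<in> L" "m1 \<in> L" "m2 \<in> L" "m1 \<noteq> m" "m2 \<noteq> m"
    and "joined k m m1" "joined k m m2"
  shows "m1 = m2"
proof (rule ccontr)
  assume "m1 \<noteq> m2"
  obtain p1 p2 where p1: "quad p1" "incid p1 k" "incid p1 m" "incid p1 m1"
    and p2: "quad p2" "incid p2 k" "incid p2 m" "incid p2 m2"
    using assms(7,8) unfolding joined_def by blast
  have "incid p1 m2"
    using incid_transfer[of k m p1 p2] k L disjoint p1 p2 quad_nonzero by blast
  with p1 L \<open>m1 \<noteq> m2\<close> show False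
    using quad_not_on_three_L[of p1 m m1 m2] by auto
qed

definition mate :: "cvec \<Rightarrow> cvec \<Rightarrow> cvec" where
  "mate k m = (SOME m'. m' \<in> L \<and> m' \<noteq> m \<and> joined k m m')"

lemma mate:
  assumes k: "k \<in> K" and m: "m \<in> L"
  shows "mate k m \<in> L" "mate k m \<noteq> m" "joined k m (mate k m)"
proof -
  obtain p where p: "quad p" "incid p k" "incid p m"
    using K_meets_L[OF k m] unfolding meets_def by blast
  then obtain m' where "m' \<in> L" "m' \<noteq> m" "incid p m'"
    using quad_other_L m by metis
  with p have "\<exists>m'. m' \<in> L \<and> m' \<noteq> m \<and> joined k m m'"
    unfolding joined_def by blast
  then show "mate k m \<in> L" "mate k m \<noteq> m" "joined k m (mate k m)"
    unfolding mate_def by (metis (mono_tags, lifting) someI_ex)+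
qed

lemma mate_eqI: "k \<in> K \<Longrightarrow> m \<in> L \<Longrightarrow> m' \<in> L \<Longrightarrow> m' \<noteq> m \<Longrightarrow> joined k m m' \<Longrightarrow> mate k m = m'"
  using joined_unique mate by metis

lemma mate_mate: "k \<in> K \<Longrightarrow> m \<in> L \<Longrightarrow> mate k (mate k m) = m"
  using mate mate_eqI joined_commute by metis

lemma L_eq_partner_pairs:
  assumes "x \<in> L" "y \<in> L" "z \<in> L" "distinct [x, y, partner x, partner y, z, partner z]"
  shows "L = {x, y, partner x, partner y, z, partner z}"
  using assms partner card_L by (intro card_subset_eq[OF finite_L, symmetric]) auto

lemma joined_partners_cases:
  assumes k: "k \<in> K" and xyz: "x \<in> L" "y \<in> L" "z \<in> L"
    and d: "distinct [x, y, partner x, partner y, z, partner z]" and "joined k x y"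
  shows "joined k (partner x) z \<and> joined k (partner y) (partner z) \<or> joined k (partner x) (partner z)"
proof -
  note L_eq = L_eq_partner_pairs[OF xyz d]
  have "mate k x = y"
    using d \<open>joined k x y\<close> by (intro mate_eqI[OF k xyz(1,2)]) auto
  moreover have "mate k z \<noteq> partner z"
    using mate[OF k xyz(3)] partner[OF xyz(3)] meets_if_joined by metis
  moreover have "\<forall>m\<in>L. mate k m \<in> L \<and> mate k m \<noteq> m \<and> mate k (mate k m) = m"
    using mate[OF k] mate_mate[OF k] by blast
  ultimately have "mate k (partner x) = z \<and> mate k (partner y) = partner z
    \<or> mate k (partner x) = partner z \<and> mate k (partner y) = z"
    using fixpoint_free_involution_on_six[OF d] L_eq by simp
  then show ?thesis
    using mate(3)[OF k] partner xyz by metis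
qed

lemma K_line_through_partner_pairs:
  assumes xyz: "x \<in> L" "y \<in> L" "z \<in> L" and d: "distinct [x, y, partner x, partner y, z, partner z]"
  shows "\<exists>k\<in>K. joined k x y \<and> joined k (partner x) z \<and> joined k (partner y) (partner z)"
proof (rule ccontr)
  assume none: "\<not> ?thesis"
  obtain p where p: "quad p" "incid p x" "incid p y"
    using meets_if_not_partner[of x y] xyz d unfolding meets_def by auto
  obtain k1 k2 where k: "k1 \<in> K" "k2 \<in> K" "k1 \<noteq> k2" "incid p k1" "incid p k2"
    using quad_two_K[OF p(1)] by blast
  have "joined k1 x y" "joined k2 x y"
    using p k unfolding joined_def by blast+
  then have "joined k1 (partner x) (partner z)" "joined k2 (partner x) (partner z)"
    using joined_partners_cases[OF _ xyz d] k(1,2) none by blast+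
  then obtain q1 q2 where q1: "quad q1" "incid q1 k1" "incid q1 (partner x)" "incid q1 (partner z)"
    and q2: "quad q2" "incid q2 k2" "incid q2 (partner x)" "incid q2 (partner z)"
    unfolding joined_def by blast
  \<comment> \<open>Both K-lines through p would pass through the single point where partner x meets partner z.\<close>
  have "incid q1 k2"
    using incid_transfer[of "partner x" "partner z" q1 q2] q1 q2 partner xyz d quad_nonzero by auto
  then have "incid p (partner x)"
    using incid_transfer[of k1 k2 p q1] k p q1 quad_nonzero by auto
  then show False
    using quad_not_on_three_L[OF p(1), of x y "partner x"] p xyz d partner by auto
qed

lemma collinear_partner_meets:
  assumes "x \<in> L" "y \<in> L" "z \<in> L" "distinct [x, y, partner x, partner y, z, partner z]"
  shows "det3 (cross x y) (cross (partner x) z) (cross (partner y) (partner z)) = 0"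
proof -
  obtain k p q r where "k \<in> K" "quad p" "quad q" "quad r"
    and "incid p k" "incid p x" "incid p y" "incid q k" "incid q (partner x)" "incid q z"
    and "incid r k" "incid r (partner y)" "incid r (partner z)"
    using K_line_through_partner_pairs[OF assms] unfolding joined_def by blast
  then show ?thesis
    using det3_cross_eq_zero_if_meets_collinear[of k p q r] line_nonzero quad_nonzero by auto
qed

lemma det3_ne_zero_if_meets:
  assumes "x \<in> L" "y \<in> L" "z \<in> L" "distinct [x, y, z]" "meets x y"
  shows "det3 x y z \<noteq> 0"
proof
  assume "det3 x y z = 0"
  obtain p where p: "quad p" "incid p x" "incid p y"
    using assms(5) unfolding meets_def by blast
  have "incid p z"
    using incid_if_det3_eq_zero[OF cross_lines_nonzero quad_nonzero[OF p(1)] p(2,3) \<open>det3 x y z = 0\<close>] assms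
    by auto
  then show False
    using quad_not_on_three_L[OF p(1) assms(1-4)] p by blast
qed

lemma exists_L_outside: "length xs < 6 \<Longrightarrow> \<exists>l\<in>L. l \<notin> set xs"
  using card_mono[of "set xs" L] card_length[of xs] card_L by fastforce

theorem inconsistent: False
proof -
  obtain a where a: "a \<in> L"
    using exists_L_outside[of "[]"] by auto
  obtain b where b: "b \<in> L" "b \<notin> {a, partner a}"
    using exists_L_outside[of "[a, partner a]"] by auto
  obtain c where c: "c \<in> L" "c \<notin> {a, partner a, b, partner b}"
    using exists_L_outside[of "[a, partner a, b, partner b]"] by auto
  define a' b' c' where "a' = partner a" "b' = partner b" "c' = partner c"
  have L: "a' \<in> L" "b' \<in> L" "c' \<in> L"
    using a b c partner(1) unfolding a'_b'_c'_def by simp_all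
  have partners: "partner a = a'" "partner b = b'" "partner c = c'"
    "partner a' = a" "partner b' = b" "partner c' = c"
    using a b c partner_partner unfolding a'_b'_c'_def by simp_all
  have d: "distinct [a, b, a', b', c, c']"
    using b c partner(2)[OF a] partner(2)[OF b(1)] partner(2)[OF c(1)] partners by auto
  have "meets a b" "meets b a'" "meets a b'"
    using meets_if_not_partner[OF a b(1)] meets_if_not_partner[OF b(1) L(1)]
      meets_if_not_partner[OF a L(2)] d partners by auto
  then have "det3 a b a' \<noteq> 0" "det3 b a' b' \<noteq> 0" "det3 a b' a' \<noteq> 0" "det3 a b b' \<noteq> 0"
    using det3_ne_zero_if_meets[OF a b(1) L(1)] det3_ne_zero_if_meets[OF b(1) L(1) L(2)]
      det3_ne_zero_if_meets[OF a L(2) L(1)] det3_ne_zero_if_meets[OF a b(1) L(2)] d by auto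
  moreover have "det3 (cross a b) (cross a' c) (cross b' c') = 0"
    "det3 (cross a b') (cross a' c) (cross b c') = 0"
    "det3 (cross a b') (cross a' c') (cross b c) = 0"
    "det3 (cross a c) (cross a' b') (cross c' b) = 0"
    "det3 (cross a c') (cross a' b') (cross c b) = 0"
    using collinear_partner_meets[of a b c] collinear_partner_meets[of a b' c]
      collinear_partner_meets[of a b' c'] collinear_partner_meets[of a c b']
      collinear_partner_meets[of a c' b'] a b c L d partners by auto
  ultimately have "cross c b' = (0, 0, 0) \<or> cross c c' = (0, 0, 0)"
    using coincidence_of_collinearities det3_rotate[of b' b a'] by metis
  moreover have "cross c b' \<noteq> (0, 0, 0)" "cross c c' \<noteq> (0, 0, 0)"
    using cross_lines_nonzero[of c b'] cross_lines_nonzero[of c c'] c(1) L d by auto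
  ultimately show False by blast
qed

end

theorem lemma3p6:
  shows "\<not> (\<exists>L K. line_arrangement (L \<union> K) \<and> L \<inter> K = {} \<and> card L = 6 \<and> card K = 8 \<and>
             (\<forall>l\<in>L. num_LKLK_on L K l = 4) \<and> (\<forall>k\<in>K. num_LKLK_on L K k = 3))"
  using lklk_configuration.inconsistent unfolding lklk_configuration_def by blast

end
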